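(* Consider the group-based tree model of the context with $G=\mathbb{Z}_2\times\mathbb{Z}_2$ (the Kimura 3-parameter model) on a tree $\mathscr{T}$ with $m\ge3$ leaves all of whose non-leaf vertices have degree at least $3$, with arbitrary real edge parameters $\psi^{(e)}(C),\psi^{(e)}(G),\psi^{(e)}(T)$. For each pendant edge $e$ (leaf $i$, internal endpoint $\nu$) fix leaves $j,k\neq i$ whose connecting path passes through $\nu$ and set, for $h\in\{C,G,T\}$, $$R_e(h)=\frac{q_{w(h,h,A)}\,q_{w(h,A,h)}}{q_{w(A,h,h)}},$$ where $w(a,b,c)$ assigns $a,b,c$ to leaves $i,j,k$ and $A$ to all other leaves. For each internal edge $e$ (endpoints $\nu,\nu'$) fix leaves $i,j$ whose connecting path contains $\nu$ but not $\nu'$ and $i',j'$ whose connecting path contains $\nu'$ but not $\nu$, and set $$R_e(h)=\frac{q_{z(h,A,h,A)}\,q_{z(A,h,A,h)}}{q_{z(h,h,A,A)}\,q_{z(A,A,h,h)}},$$ where $z(a,b,c,d)$ assigns $a,b,c,d$ to $i,j,i',j'$ and $A$ to all other leaves. (All denominators are nonzero.) Then all edge parameters of all edges are non-negative if and only if for every edge $e$ $$R_e(C)R_e(T)\le R_e(G),\qquad R_e(G)R_e(T)\le R_e(C),\qquad R_e(C)R_e(G)\le R_e(T).$$ Moreover, for each edge $e$ these three inequalities are respectively equivalent to $\psi^{(e)}(C)\ge0$, $\psi^{(e)}(G)\ge0$, $\psi^{(e)}(T)\ge0$.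
   Context: Group-based model on a tree. $G=\mathbb{Z}_2\times\mathbb{Z}_2$ is written additively with elements identified as $A=(0,0)$, $C=(1,0)$, $G=(0,1)$, $T=(1,1)$; characters are $\widehat{(a,b)}((c,d))=(-1)^{ac+bd}$. The Fourier transform of $a$ on the group is $\check a(g)=\sum_{h}\hat g(h)a(h)$. $\mathscr{T}$ is a finite tree with $m$ leaves, one of which is designated the root leaf $r$. Each edge $e$ carries a function $\psi^{(e)}$ from the group to $\mathbb{R}$ with $\psi^{(e)}(A)=-(\psi^{(e)}(C)+\psi^{(e)}(G)+\psi^{(e)}(T))$ (the values at $C,G,T$ are the edge parameters); put $Q^{(e)}_{g,h}=\psi^{(e)}(h-g)$, $P^{(e)}=\exp(Q^{(e)})$, $f^{(e)}(h)=P^{(e)}_{A,h}$. Edges are directed away from $r$. For $\mathbf g$ in the $m$-fold product of the group (indexed by leaves, $r$ included), $p_{\mathbf g}=\sum_\sigma\prod_{e=(u\to v)}P^{(e)}_{\sigma(u),\sigma(v)}$, the sum over all maps $\sigma$ from vertices to the group with $\sigma(r)=A$ and $\sigma$ equal to $\mathbf g$ on leaves. Its Fourier transform is $q_{\mathbf g}=\sum_{\mathbf h}\prod_x\hat g_x(h_x)p_{\mathbf h}$. For an edge $e$, $\Lambda(e)$ is the set of leaves whose path to $r$ contains $e$, ${}^*g_e=\sum_{x\in\Lambda(e)}g_x$, and it is known (Hendy; Evans–Speed) that $q_{\mathbf g}=\prod_e\check f^{(e)}({}^*g_e)$. *)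

theory Defs
  imports "HOL-Analysis.Analysis" "HOL-Library.FuncSet"
begin

datatype nuc = nA | nC | nG | nT

instance nuc :: finite
proof
  have "UNIV = {nA, nC, nG, nT}" by (auto intro: nuc.exhaust)
  then show "finite (UNIV :: nuc set)" by (metis finite.emptyI finite_insert)
qed

text \<open>Identification A=(0,0), C=(1,0), G=(0,1), T=(1,1).\<close>
fun bit1 :: "nuc \<Rightarrow> nat" where
  "bit1 nA = 0" | "bit1 nC = 1" | "bit1 nG = 0" | "bit1 nT = 1"
fun bit2 :: "nuc \<Rightarrow> nat" where
  "bit2 nA = 0" | "bit2 nC = 0" | "bit2 nG = 1" | "bit2 nT = 1"

definition of_bits :: "nat \<Rightarrow> nat \<Rightarrow> nuc" where
  "of_bits a b = (if a = 0 then (if b = 0 then nA else nG) else (if b = 0 then nC else nT))"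

definition nadd :: "nuc \<Rightarrow> nuc \<Rightarrow> nuc" where
  "nadd g h = of_bits ((bit1 g + bit1 h) mod 2) ((bit2 g + bit2 h) mod 2)"

definition nsub :: "nuc \<Rightarrow> nuc \<Rightarrow> nuc" where
  "nsub h g = of_bits (nat ((int (bit1 h) - int (bit1 g)) mod 2))
                      (nat ((int (bit2 h) - int (bit2 g)) mod 2))"

definition chi :: "nuc \<Rightarrow> nuc \<Rightarrow> real" where
  "chi g h = (-1) ^ (bit1 g * bit1 h + bit2 g * bit2 h)"

fun mpow :: "(nuc \<Rightarrow> nuc \<Rightarrow> real) \<Rightarrow> nat \<Rightarrow> nuc \<Rightarrow> nuc \<Rightarrow> real" where
  "mpow Q 0 = (\<lambda>g h. if g = h then 1 else 0)"
| "mpow Q (Suc n) = (\<lambda>g h. \<Sum>k\<in>UNIV. mpow Q n g k * Q k h)"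

definition mexp :: "(nuc \<Rightarrow> nuc \<Rightarrow> real) \<Rightarrow> nuc \<Rightarrow> nuc \<Rightarrow> real" where
  "mexp Q g h = (\<Sum>n. mpow Q n g h / fact n)"

definition is_path :: "'v set \<Rightarrow> ('v \<Rightarrow> 'v \<Rightarrow> bool) \<Rightarrow> 'v list \<Rightarrow> 'v \<Rightarrow> 'v \<Rightarrow> bool" where
  "is_path V adj ps x y \<longleftrightarrow> ps \<noteq> [] \<and> hd ps = x \<and> last ps = y \<and> distinct ps \<and> set ps \<subseteq> V
     \<and> (\<forall>i. Suc i < length ps \<longrightarrow> adj (ps ! i) (ps ! Suc i))"

definition on_path :: "'v set \<Rightarrow> ('v \<Rightarrow> 'v \<Rightarrow> bool) \<Rightarrow> 'v \<Rightarrow> 'v \<Rightarrow> 'v \<Rightarrow> bool" where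
  "on_path V adj w x y \<longleftrightarrow> (\<exists>ps. is_path V adj ps x y \<and> w \<in> set ps)"

definition is_tree :: "'v set \<Rightarrow> ('v \<Rightarrow> 'v \<Rightarrow> bool) \<Rightarrow> bool" where
  "is_tree V adj \<longleftrightarrow> finite V \<and> V \<noteq> {}
     \<and> (\<forall>u v. adj u v \<longrightarrow> u \<in> V \<and> v \<in> V)
     \<and> (\<forall>u v. adj u v \<longrightarrow> adj v u) \<and> (\<forall>u. \<not> adj u u)
     \<and> (\<forall>x\<in>V. \<forall>y\<in>V. \<exists>ps. is_path V adj ps x y)
     \<and> \<not> (\<exists>ps. length ps \<ge> 3 \<and> distinct ps \<and> set ps \<subseteq> V
            \<and> (\<forall>i. Suc i < length ps \<longrightarrow> adj (ps ! i) (ps ! Suc i))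
            \<and> adj (last ps) (hd ps))"

definition neighbours :: "'v set \<Rightarrow> ('v \<Rightarrow> 'v \<Rightarrow> bool) \<Rightarrow> 'v \<Rightarrow> 'v set" where
  "neighbours V adj v = {u \<in> V. adj v u}"

definition leaves :: "'v set \<Rightarrow> ('v \<Rightarrow> 'v \<Rightarrow> bool) \<Rightarrow> 'v set" where
  "leaves V adj = {v \<in> V. card (neighbours V adj v) = 1}"

text \<open>Edges directed away from the root leaf r: (u,v) with u on the path from r to v.\<close>
definition dedges :: "'v set \<Rightarrow> ('v \<Rightarrow> 'v \<Rightarrow> bool) \<Rightarrow> 'v \<Rightarrow> ('v \<times> 'v) set" where
  "dedges V adj r = {(u, v). adj u v \<and> on_path V adj u r v}"

text \<open>Full edge function: psi(A) = -(psi(C)+psi(G)+psi(T)); the values at C,G,T are the parameters.\<close>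
definition fpsi :: "('e \<Rightarrow> nuc \<Rightarrow> real) \<Rightarrow> 'e \<Rightarrow> nuc \<Rightarrow> real" where
  "fpsi psi e h = (if h = nA then - (psi e nC + psi e nG + psi e nT) else psi e h)"

definition Qm :: "('e \<Rightarrow> nuc \<Rightarrow> real) \<Rightarrow> 'e \<Rightarrow> nuc \<Rightarrow> nuc \<Rightarrow> real" where
  "Qm psi e g h = fpsi psi e (nsub h g)"

definition Pm :: "('e \<Rightarrow> nuc \<Rightarrow> real) \<Rightarrow> 'e \<Rightarrow> nuc \<Rightarrow> nuc \<Rightarrow> real" where
  "Pm psi e = mexp (Qm psi e)"

definition pprob :: "'v set \<Rightarrow> ('v \<Rightarrow> 'v \<Rightarrow> bool) \<Rightarrow> 'v \<Rightarrow> ('v \<times> 'v \<Rightarrow> nuc \<Rightarrow> real)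
     \<Rightarrow> ('v \<Rightarrow> nuc) \<Rightarrow> real" where
  "pprob V adj r psi g =
     (\<Sum>\<sigma> \<in> {\<sigma> \<in> V \<rightarrow>\<^sub>E (UNIV :: nuc set). \<sigma> r = nA \<and> (\<forall>x\<in>leaves V adj. \<sigma> x = g x)}.
        \<Prod>e \<in> dedges V adj r. Pm psi e (\<sigma> (fst e)) (\<sigma> (snd e)))"

definition qfour :: "'v set \<Rightarrow> ('v \<Rightarrow> 'v \<Rightarrow> bool) \<Rightarrow> 'v \<Rightarrow> ('v \<times> 'v \<Rightarrow> nuc \<Rightarrow> real)
     \<Rightarrow> ('v \<Rightarrow> nuc) \<Rightarrow> real" where
  "qfour V adj r psi g =
     (\<Sum>h \<in> leaves V adj \<rightarrow>\<^sub>E (UNIV :: nuc set).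
        (\<Prod>x \<in> leaves V adj. chi (g x) (h x)) * pprob V adj r psi h)"

text \<open>Leaf labelling assigning a,b,c to i,j,k and A elsewhere (w) and a,b,c,d to i,j,i',j' (z).\<close>
definition lab3 :: "'v \<Rightarrow> 'v \<Rightarrow> 'v \<Rightarrow> nuc \<Rightarrow> nuc \<Rightarrow> nuc \<Rightarrow> 'v \<Rightarrow> nuc" where
  "lab3 i j k a b c = (\<lambda>x. if x = i then a else if x = j then b else if x = k then c else nA)"

definition lab4 :: "'v \<Rightarrow> 'v \<Rightarrow> 'v \<Rightarrow> 'v \<Rightarrow> nuc \<Rightarrow> nuc \<Rightarrow> nuc \<Rightarrow> nuc \<Rightarrow> 'v \<Rightarrow> nuc" where
  "lab4 i j i' j' a b c d = (\<lambda>x. if x = i then a else if x = j then b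
       else if x = i' then c else if x = j' then d else nA)"

text \<open>For a pendant edge e: the leaf endpoint i and the internal endpoint nu.\<close>
definition pend_leaf :: "'v set \<Rightarrow> ('v \<Rightarrow> 'v \<Rightarrow> bool) \<Rightarrow> 'v \<times> 'v \<Rightarrow> 'v" where
  "pend_leaf V adj e = (if snd e \<in> leaves V adj then snd e else fst e)"
definition pend_inner :: "'v set \<Rightarrow> ('v \<Rightarrow> 'v \<Rightarrow> bool) \<Rightarrow> 'v \<times> 'v \<Rightarrow> 'v" where
  "pend_inner V adj e = (if snd e \<in> leaves V adj then fst e else snd e)"

definition is_pendant :: "'v set \<Rightarrow> ('v \<Rightarrow> 'v \<Rightarrow> bool) \<Rightarrow> 'v \<times> 'v \<Rightarrow> bool" where
  "is_pendant V adj e \<longleftrightarrow> fst e \<in> leaves V adj \<or> snd e \<in> leaves V adj"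

text \<open>Admissible choice of leaves for edge e.
  Pendant edge: s1 = j, s2 = k (s3, s4 unused).
  Internal edge e = (nu, nu'): s1 = i, s2 = j, s3 = i', s4 = j'.\<close>
definition admissible :: "'v set \<Rightarrow> ('v \<Rightarrow> 'v \<Rightarrow> bool) \<Rightarrow> 'v \<times> 'v \<Rightarrow> 'v \<Rightarrow> 'v \<Rightarrow> 'v \<Rightarrow> 'v \<Rightarrow> bool" where
  "admissible V adj e s1 s2 s3 s4 \<longleftrightarrow>
     (if is_pendant V adj e then
        s1 \<in> leaves V adj \<and> s2 \<in> leaves V adj \<and> s1 \<noteq> pend_leaf V adj e \<and> s2 \<noteq> pend_leaf V adj e
        \<and> on_path V adj (pend_inner V adj e) s1 s2
      else
        s1 \<in> leaves V adj \<and> s2 \<in> leaves V adj \<and> s3 \<in> leaves V adj \<and> s4 \<in> leaves V adj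
        \<and> on_path V adj (fst e) s1 s2 \<and> \<not> on_path V adj (snd e) s1 s2
        \<and> on_path V adj (snd e) s3 s4 \<and> \<not> on_path V adj (fst e) s3 s4)"

definition Rnum :: "'v set \<Rightarrow> ('v \<Rightarrow> 'v \<Rightarrow> bool) \<Rightarrow> 'v \<Rightarrow> ('v \<times> 'v \<Rightarrow> nuc \<Rightarrow> real)
   \<Rightarrow> 'v \<times> 'v \<Rightarrow> 'v \<Rightarrow> 'v \<Rightarrow> 'v \<Rightarrow> 'v \<Rightarrow> nuc \<Rightarrow> real" where
  "Rnum V adj r psi e s1 s2 s3 s4 h =
     (let q = qfour V adj r psi in
      if is_pendant V adj e then
        (let i = pend_leaf V adj e in q (lab3 i s1 s2 h h nA) * q (lab3 i s1 s2 h nA h))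
      else q (lab4 s1 s2 s3 s4 h nA h nA) * q (lab4 s1 s2 s3 s4 nA h nA h))"

definition Rden :: "'v set \<Rightarrow> ('v \<Rightarrow> 'v \<Rightarrow> bool) \<Rightarrow> 'v \<Rightarrow> ('v \<times> 'v \<Rightarrow> nuc \<Rightarrow> real)
   \<Rightarrow> 'v \<times> 'v \<Rightarrow> 'v \<Rightarrow> 'v \<Rightarrow> 'v \<Rightarrow> 'v \<Rightarrow> nuc \<Rightarrow> real" where
  "Rden V adj r psi e s1 s2 s3 s4 h =
     (let q = qfour V adj r psi in
      if is_pendant V adj e then
        (let i = pend_leaf V adj e in q (lab3 i s1 s2 nA h h))
      else q (lab4 s1 s2 s3 s4 h h nA nA) * q (lab4 s1 s2 s3 s4 nA nA h h))"

definition Rratio :: "'v set \<Rightarrow> ('v \<Rightarrow> 'v \<Rightarrow> bool) \<Rightarrow> 'v \<Rightarrow> ('v \<times> 'v \<Rightarrow> nuc \<Rightarrow> real)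
   \<Rightarrow> 'v \<times> 'v \<Rightarrow> 'v \<Rightarrow> 'v \<Rightarrow> 'v \<Rightarrow> 'v \<Rightarrow> nuc \<Rightarrow> real" where
  "Rratio V adj r psi e s1 s2 s3 s4 h =
     Rnum V adj r psi e s1 s2 s3 s4 h / Rden V adj r psi e s1 s2 s3 s4 h"

end

theory Submission
  imports Defs
begin

text \<open>
  Following Hendy and Evans--Speed, the rate matrix of every edge is a convolution matrix on
  the Klein four-group, hence diagonalised by the characters with eigenvalues \<open>\<lambda>\<^sub>e = psi_hat\<close>
  (the Fourier transform of \<open>\<psi>\<^sup>(\<^sup>e\<^sup>)\<close>), and \<open>P\<^sup>(\<^sup>e\<^sup>)\<close> has eigenvalues \<open>exp \<lambda>\<^sub>e\<close>.  Rooting the tree and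
  passing from vertex states to edge increments gives Hendy's formula
  \<open>q\<^sub>g = \<Prod>\<^sub>e exp (\<lambda>\<^sub>e (\<^sup>*g\<^sub>e))\<close>.  Each labelling in \<open>R\<^sub>e\<close> puts one letter \<open>h\<close> on two leaves, so its
  \<open>q\<close> is the exponential of the sum of \<open>\<lambda>(h)\<close> along the path between them.  A four-point
  identity for these path sums, applied to the quartet chosen for \<open>e\<close> (of which \<open>e\<close> is the
  central edge), gives \<open>R\<^sub>e(h) = exp (2 \<lambda>\<^sub>e(h))\<close>, and \<open>\<lambda>\<^sub>e(C) = -2(\<psi>(C)+\<psi>(T))\<close> etc. turn the
  inequalities into \<open>\<psi>\<^sup>(\<^sup>e\<^sup>)(h) \<ge> 0\<close>.  The degree hypothesis of the theorem only guarantees that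
  admissible leaves exist, which the statement assumes anyway.
\<close>

section \<open>The group \<open>\<int>\<^sub>2 \<times> \<int>\<^sub>2\<close> and its characters\<close>

lemma UNIV_nuc: "(UNIV :: nuc set) = {nA, nC, nG, nT}"
  by (auto intro: nuc.exhaust)

lemma nadd_table: "nadd nA x = x" "nadd x nA = x" "nadd x x = nA"
  "nadd nC nG = nT" "nadd nG nC = nT" "nadd nC nT = nG" "nadd nT nC = nG" "nadd nG nT = nC" "nadd nT nG = nC"
  by (cases x; simp add: nadd_def of_bits_def)+

lemma nsub_eq_nadd: "nsub x y = nadd x y"
  by (cases x; cases y; simp add: nadd_def nsub_def of_bits_def)

text \<open>The nucleotides with \<^const>\<open>nadd\<close> form the Klein four-group; registering this as an
  instance of \<open>ab_group_add\<close> lets us use \<open>+\<close>, \<open>-\<close>, \<open>0\<close> and the big-operator library.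
  Every element is its own inverse.\<close>

instantiation nuc :: ab_group_add
begin
definition "zero_nuc = nA"
definition "plus_nuc = nadd"
definition "minus_nuc = nsub"
definition "uminus_nuc = (\<lambda>x::nuc. x)"
instance
proof
  fix a b c :: nuc
  show "a + b + c = a + (b + c)" unfolding plus_nuc_def
    by (cases a; cases b; cases c) (simp_all add: nadd_table)
  show "a + b = b + a" unfolding plus_nuc_def
    by (cases a; cases b) (simp_all add: nadd_table)
  show "0 + a = a" unfolding plus_nuc_def zero_nuc_def
    by (simp add: nadd_table)
  show "- a + a = 0" unfolding plus_nuc_def zero_nuc_def uminus_nuc_def
    by (simp add: nadd_table)
  show "a - b = a + - b" unfolding plus_nuc_def minus_nuc_def uminus_nuc_def
    by (simp add: nsub_eq_nadd)
qed
end

lemma nA_eq_0 [simp]: "nA = 0"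
  by (simp add: zero_nuc_def)

lemma nuc_diff_eq_add: "(x::nuc) - y = x + y"
  by (simp add: minus_nuc_def plus_nuc_def nsub_eq_nadd)

lemma nuc_add_table [simp]: "(x::nuc) + x = 0"
  "nC + nG = nT" "nG + nC = nT" "nC + nT = nG" "nT + nC = nG" "nG + nT = nC" "nT + nG = nC"
  by (simp_all add: plus_nuc_def nadd_table flip: nA_eq_0)

lemma nuc_nonzero [simp]: "nC \<noteq> (0::nuc)" "nG \<noteq> (0::nuc)" "nT \<noteq> (0::nuc)"
  by (simp_all flip: nA_eq_0)

lemma nuc_cases: "P 0 \<Longrightarrow> P nC \<Longrightarrow> P nG \<Longrightarrow> P nT \<Longrightarrow> P x"
  by (cases x) (auto simp flip: nA_eq_0)

lemma card_nuc [simp]: "CARD(nuc) = 4"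
  by (simp add: UNIV_nuc)

lemma sum_nuc: "(\<Sum>x\<in>(UNIV::nuc set). f x) = f 0 + f nC + f nG + f nT"
  by (simp add: UNIV_nuc add_ac)

lemma chi_table [simp]: "chi 0 x = 1" "chi x 0 = 1" "chi nC nC = -1" "chi nC nG = 1" "chi nC nT = -1"
  "chi nG nC = 1" "chi nG nG = -1" "chi nG nT = -1" "chi nT nC = -1" "chi nT nG = -1" "chi nT nT = 1"
  by (cases x; simp add: chi_def flip: nA_eq_0)+

lemma chi_commute: "chi a b = chi b a"
  by (simp add: chi_def mult.commute)

lemma chi_add_right: "chi g (a + b) = chi g a * chi g b"
  by (rule nuc_cases[of _ g]; rule nuc_cases[of _ a]; rule nuc_cases[of _ b]; simp)

lemma chi_add_left: "chi (a + b) g = chi a g * chi b g"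
  by (rule nuc_cases[of _ g]; rule nuc_cases[of _ a]; rule nuc_cases[of _ b]; simp)

lemma chi_sum_right: "finite A \<Longrightarrow> chi g (\<Sum>v\<in>A. f v) = (\<Prod>v\<in>A. chi g (f v))"
  by (induction A rule: finite_induct) (simp_all add: chi_add_right)

lemma chi_sum_left: "finite A \<Longrightarrow> chi (\<Sum>v\<in>A. f v) g = (\<Prod>v\<in>A. chi (f v) g)"
  by (induction A rule: finite_induct) (simp_all add: chi_add_left)

lemma chi_orthogonal: "(\<Sum>m\<in>UNIV. chi k m * chi k' m) = (if k = k' then 4 else 0)"
  by (rule nuc_cases[of _ k]; rule nuc_cases[of _ k']; simp add: sum_nuc)

section \<open>Diagonalising the rate and transition matrices\<close>

text \<open>The inverse Fourier transform of a function on the group.  A matrix of the form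
  \<open>M a b = ifourier L (b - a)\<close> is diagonalised by the characters with eigenvalues \<open>L k\<close>.\<close>

definition ifourier :: "(nuc \<Rightarrow> real) \<Rightarrow> nuc \<Rightarrow> real" where
  "ifourier L t = (\<Sum>k\<in>UNIV. L k * chi k t) / 4"

lemma fourier_ifourier: "(\<Sum>t\<in>UNIV. chi g t * ifourier L t) = L g"
proof -
  have "(\<Sum>t\<in>UNIV. chi g t * ifourier L t) = (\<Sum>t\<in>UNIV. \<Sum>k\<in>UNIV. L k / 4 * (chi g t * chi k t))"
    unfolding ifourier_def by (simp add: sum_distrib_left sum_divide_distrib mult_ac)
  also have "\<dots> = (\<Sum>k\<in>UNIV. L k / 4 * (\<Sum>t\<in>UNIV. chi g t * chi k t))"
    by (subst sum.swap) (simp add: sum_distrib_left)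
  also have "\<dots> = L g"
    by (simp add: chi_orthogonal if_distrib cong: if_cong)
  finally show ?thesis .
qed

lemma ifourier_one: "ifourier (\<lambda>_. 1) t = (if t = 0 then 1 else 0)"
  by (rule nuc_cases[of _ t]; simp add: ifourier_def sum_nuc)

lemma ifourier_convolution:
  "(\<Sum>m\<in>UNIV. ifourier L1 (m - a) * ifourier L2 (b - m)) = ifourier (\<lambda>k. L1 k * L2 k) (b - a)"
proof -
  define F where "F k k' = L1 k * chi k a * L2 k' * chi k' b / 16" for k k'
  have "(\<Sum>m\<in>UNIV. ifourier L1 (m - a) * ifourier L2 (b - m))
      = (\<Sum>m\<in>UNIV. \<Sum>k\<in>UNIV. \<Sum>k'\<in>UNIV. F k k' * (chi k m * chi k' m))"
    unfolding ifourier_def F_def nuc_diff_eq_add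
    by (simp add: sum_product sum_divide_distrib chi_add_right mult_ac)
  also have "\<dots> = (\<Sum>k\<in>UNIV. \<Sum>k'\<in>UNIV. F k k' * (\<Sum>m\<in>UNIV. chi k m * chi k' m))"
  proof -
    have "(\<Sum>m\<in>UNIV. \<Sum>k\<in>UNIV. \<Sum>k'\<in>UNIV. F k k' * (chi k m * chi k' m))
        = (\<Sum>k\<in>UNIV. \<Sum>m\<in>UNIV. \<Sum>k'\<in>UNIV. F k k' * (chi k m * chi k' m))"
      by (rule sum.swap)
    also have "\<dots> = (\<Sum>k\<in>UNIV. \<Sum>k'\<in>UNIV. \<Sum>m\<in>UNIV. F k k' * (chi k m * chi k' m))"
      by (intro sum.cong refl sum.swap)
    finally show ?thesis by (simp add: sum_distrib_left)
  qed
  also have "\<dots> = ifourier (\<lambda>k. L1 k * L2 k) (b - a)"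
    unfolding ifourier_def F_def nuc_diff_eq_add
    by (simp add: chi_orthogonal if_distrib sum_divide_distrib chi_add_right mult_ac cong: if_cong)
  finally show ?thesis .
qed

lemma ifourier_fourier: "ifourier (\<lambda>k. \<Sum>h\<in>UNIV. chi k h * f h) t = f t"
proof -
  have "ifourier (\<lambda>k. \<Sum>h\<in>UNIV. chi k h * f h) t = (\<Sum>k\<in>UNIV. \<Sum>h\<in>UNIV. f h / 4 * (chi h k * chi t k))"
    unfolding ifourier_def
    by (simp add: sum_distrib_left sum_distrib_right sum_divide_distrib chi_commute mult_ac)
  also have "\<dots> = (\<Sum>h\<in>UNIV. f h / 4 * (\<Sum>k\<in>UNIV. chi h k * chi t k))"
    by (subst sum.swap) (simp add: sum_distrib_left)
  also have "\<dots> = f t"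
    by (simp add: chi_orthogonal if_distrib cong: if_cong)
  finally show ?thesis .
qed

lemma mpow_convolution:
  assumes Q: "\<And>a b. Q a b = ifourier L (b - a)"
  shows "mpow Q n a b = ifourier (\<lambda>k. L k ^ n) (b - a)"
proof (induction n arbitrary: b)
  case 0
  show ?case by (simp add: ifourier_one)
next
  case (Suc n)
  have "mpow Q (Suc n) a b = (\<Sum>m\<in>UNIV. ifourier (\<lambda>k. L k ^ n) (m - a) * ifourier L (b - m))"
    by (simp add: Suc.IH Q)
  also have "\<dots> = ifourier (\<lambda>k. L k ^ Suc n) (b - a)"
    by (subst ifourier_convolution) (simp add: mult.commute)
  finally show ?case .
qed

lemma mexp_convolution:
  assumes Q: "\<And>a b. Q a b = ifourier L (b - a)"
  shows "mexp Q a b = ifourier (\<lambda>k. exp (L k)) (b - a)"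
proof -
  have "(\<lambda>n. \<Sum>k\<in>UNIV. L k ^ n / fact n * (chi k (b - a) / 4))
        sums (\<Sum>k\<in>UNIV. exp (L k) * (chi k (b - a) / 4))"
    by (intro sums_sum sums_mult2) (use exp_converges[of "L _"] in \<open>simp add: divide_inverse mult.commute\<close>)
  moreover have "(\<lambda>n. \<Sum>k\<in>UNIV. L k ^ n / fact n * (chi k (b - a) / 4)) = (\<lambda>n. mpow Q n a b / fact n)"
    by (simp add: mpow_convolution[OF Q] ifourier_def sum_divide_distrib algebra_simps)
  ultimately show ?thesis
    unfolding mexp_def ifourier_def by (simp add: sums_unique[symmetric] sum_divide_distrib algebra_simps)
qed

text \<open>The Fourier transform of the edge function \<open>\<psi>\<^sup>(\<^sup>e\<^sup>)\<close>: these are the eigenvalues of the rate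
  matrix \<open>Q\<^sup>(\<^sup>e\<^sup>)\<close>, and by the definition of \<open>\<psi>\<^sup>(\<^sup>e\<^sup>)(A)\<close> the eigenvalue at \<open>0\<close> vanishes.\<close>

definition psi_hat :: "('e \<Rightarrow> nuc \<Rightarrow> real) \<Rightarrow> 'e \<Rightarrow> nuc \<Rightarrow> real" where
  "psi_hat psi e k = (\<Sum>h\<in>UNIV. chi k h * fpsi psi e h)"

lemma psi_hat_0 [simp]: "psi_hat psi e 0 = 0"
  by (simp add: psi_hat_def sum_nuc fpsi_def)

lemma psi_hat_values: "psi_hat psi e nC = -2 * (psi e nC + psi e nT)"
  "psi_hat psi e nG = -2 * (psi e nG + psi e nT)" "psi_hat psi e nT = -2 * (psi e nC + psi e nG)"
  by (simp_all add: psi_hat_def sum_nuc fpsi_def)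

lemma Qm_convolution: "Qm psi e a b = ifourier (psi_hat psi e) (b - a)"
  unfolding Qm_def psi_hat_def ifourier_fourier by (simp add: minus_nuc_def)

lemma Pm_convolution: "Pm psi e a b = ifourier (\<lambda>k. exp (psi_hat psi e k)) (b - a)"
  unfolding Pm_def by (rule mexp_convolution[OF Qm_convolution])

section \<open>Paths in a tree\<close>

lemma exit_point:
  assumes "xs \<noteq> []" "P (hd xs)" "\<not> P (last xs)"
  shows "\<exists>ys a b zs. xs = ys @ a # b # zs \<and> P a \<and> \<not> P b"
  using assms
proof (induction xs)
  case Nil then show ?case by simp
next
  case (Cons x xs)
  then have ne: "xs \<noteq> []" by auto
  show ?case
  proof (cases "P (hd xs)")
    case True
    with Cons ne obtain ys a b zs where "xs = ys @ a # b # zs \<and> P a \<and> \<not> P b" by auto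
    then show ?thesis by (intro exI[of _ "x # ys"]) auto
  next
    case False
    then show ?thesis
      using Cons ne by (intro exI[of _ "[]"] exI[of _ x] exI[of _ "hd xs"] exI[of _ "tl xs"]) auto
  qed
qed

lemma is_path_successively: "is_path V adj ps x y \<longleftrightarrow>
    ps \<noteq> [] \<and> hd ps = x \<and> last ps = y \<and> distinct ps \<and> set ps \<subseteq> V \<and> successively adj ps"
  unfolding is_path_def successively_conv_nth by blast

locale tree_graph =
  fixes V :: "'v set" and adj :: "'v \<Rightarrow> 'v \<Rightarrow> bool"
  assumes tree: "is_tree V adj"
begin

lemma finite_V: "finite V" using tree by (simp add: is_tree_def)
lemma adj_in_V: "adj u v \<Longrightarrow> u \<in> V \<and> v \<in> V" using tree by (simp add: is_tree_def)
lemma adj_sym: "adj u v \<Longrightarrow> adj v u" using tree by (simp add: is_tree_def)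
lemma adj_irrefl: "\<not> adj u u" using tree by (simp add: is_tree_def)
lemma connected: "x \<in> V \<Longrightarrow> y \<in> V \<Longrightarrow> \<exists>ps. is_path V adj ps x y" using tree by (simp add: is_tree_def)
lemma no_cycle: "length ps \<ge> 3 \<Longrightarrow> distinct ps \<Longrightarrow> set ps \<subseteq> V \<Longrightarrow> successively adj ps
    \<Longrightarrow> adj (last ps) (hd ps) \<Longrightarrow> False"
  using tree unfolding is_tree_def successively_conv_nth by blast

lemma successively_rev_adj: "successively adj (rev ps) \<longleftrightarrow> successively adj ps"
proof -
  have "successively (\<lambda>x y. adj y x) ps \<longleftrightarrow> successively adj ps"
    by (rule successively_cong) (auto intro: adj_sym)
  then show ?thesis by simp
qed

text \<open>Two walks leaving \<open>x\<close> through different first steps and ending at the same vertex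
  close up to a cycle: follow the first walk until it meets the second one and return
  along the second.\<close>

lemma no_two_walks:
  assumes w1: "successively adj (x # ps)" and w2: "successively adj (x # qs)"
    and d1: "distinct (x # ps)" and d2: "distinct (x # qs)"
    and s1: "set (x # ps) \<subseteq> V" and s2: "set (x # qs) \<subseteq> V"
    and ne1: "ps \<noteq> []" and ne2: "qs \<noteq> []" and same_end: "last ps = last qs"
    and diff_start: "hd ps \<noteq> hd qs"
  shows False
proof -
  have "\<exists>w\<in>set ps. w \<in> set qs" using ne1 ne2 same_end by (metis last_in_set)
  then obtain p1 w p2 where ps: "ps = p1 @ w # p2" and wq: "w \<in> set qs"
    and p1_off: "\<forall>y\<in>set p1. y \<notin> set qs"
    using split_list_first_prop[of ps "\<lambda>y. y \<in> set qs"] by blast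
  obtain q1 q2 where qs: "qs = q1 @ w # q2" using wq split_list by metis
  define cyc where "cyc = x # p1 @ w # rev q1"
  have len: "length cyc \<ge> 3"
  proof (cases "p1 = []")
    case True
    then have "q1 \<noteq> []" using diff_start ps qs by auto
    then show ?thesis by (cases q1) (simp_all add: cyc_def)
  next
    case False then show ?thesis by (cases p1) (simp_all add: cyc_def)
  qed
  have "distinct cyc"
  proof -
    have "x \<notin> set p1" "x \<noteq> w" "distinct p1" "w \<notin> set p1" using d1 unfolding ps by auto
    moreover have "x \<notin> set q1" "distinct q1" "w \<notin> set q1" using d2 unfolding qs by auto
    moreover have "set p1 \<inter> set q1 = {}" using p1_off unfolding qs by auto
    ultimately show ?thesis unfolding cyc_def by auto
  qed
  moreover have "set cyc \<subseteq> V" using s1 s2 unfolding cyc_def ps qs by auto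
  moreover have "successively adj cyc"
  proof -
    have wa: "successively adj (x # p1 @ [w])"
      using w1 unfolding ps by (simp add: successively_append_iff flip: append_Cons)
    have wq1: "successively adj q1" "q1 \<noteq> [] \<Longrightarrow> adj (last q1) w"
      using w2 unfolding qs by (auto simp: successively_append_iff successively_Cons)
    have "rev q1 = [] \<or> adj (last (x # p1 @ [w])) (hd (rev q1))"
      using wq1(2) by (cases "q1 = []") (auto simp: hd_rev intro: adj_sym)
    then have "successively adj ((x # p1 @ [w]) @ rev q1)"
      unfolding successively_append_iff using wa wq1(1) successively_rev_adj by blast
    then show ?thesis by (simp add: cyc_def)
  qed
  moreover have "adj (last cyc) (hd cyc)"
  proof -
    have "adj x (hd qs)" using w2 ne2 by (cases qs) auto
    then show ?thesis using qs by (cases q1) (auto simp: cyc_def last_rev intro: adj_sym)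
  qed
  ultimately show False using no_cycle[OF len] by blast
qed

lemma path_unique: "is_path V adj ps x y \<Longrightarrow> is_path V adj qs x y \<Longrightarrow> ps = qs"
proof (induction ps arbitrary: x qs)
  case Nil then show ?case by (simp add: is_path_successively)
next
  case (Cons x0 ps')
  from Cons.prems have x0: "x0 = x" by (simp add: is_path_successively)
  obtain qs' where qs: "qs = x # qs'" using Cons.prems by (cases qs) (auto simp: is_path_successively)
  consider "ps' = []" | "qs' = []" | "ps' \<noteq> []" "qs' \<noteq> []" by blast
  then show ?case
  proof cases
    case 1
    then have "qs' = []" using Cons.prems qs x0
      by (auto simp: is_path_successively dest: last_in_set split: if_splits)
    then show ?thesis using 1 x0 qs by simp
  next
    case 2
    then have "ps' = []" using Cons.prems qs x0
      by (auto simp: is_path_successively dest: last_in_set split: if_splits)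
    then show ?thesis using 2 x0 qs by simp
  next
    case 3
    show ?thesis
    proof (cases "hd ps' = hd qs'")
      case True
      have "is_path V adj ps' (hd ps') y" "is_path V adj qs' (hd ps') y"
        using Cons.prems 3 True x0 qs by (auto simp: is_path_successively successively_Cons)
      then show ?thesis using Cons.IH x0 qs by blast
    next
      case False
      then show ?thesis using no_two_walks[of x ps' qs'] Cons.prems x0 qs 3
        by (simp add: is_path_successively)
    qed
  qed
qed

definition tpath :: "'v \<Rightarrow> 'v \<Rightarrow> 'v list" where
  "tpath x y = (THE ps. is_path V adj ps x y)"

lemma tpath: "x \<in> V \<Longrightarrow> y \<in> V \<Longrightarrow> is_path V adj (tpath x y) x y"
  unfolding tpath_def using connected path_unique by (metis theI)

lemma tpath_eq: "is_path V adj ps x y \<Longrightarrow> tpath x y = ps"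
proof -
  assume p: "is_path V adj ps x y"
  then have "x \<in> V" "y \<in> V" by (auto simp: is_path_successively dest: hd_in_set last_in_set)
  then show ?thesis using tpath p path_unique by blast
qed

lemma tpath_props:
  assumes "x \<in> V" "y \<in> V"
  shows "tpath x y \<noteq> []" "hd (tpath x y) = x" "last (tpath x y) = y" "distinct (tpath x y)"
    "set (tpath x y) \<subseteq> V" "successively adj (tpath x y)"
  using tpath[OF assms] by (simp_all add: is_path_successively)

lemma on_path_iff: "x \<in> V \<Longrightarrow> y \<in> V \<Longrightarrow> on_path V adj w x y \<longleftrightarrow> w \<in> set (tpath x y)"
  unfolding on_path_def using tpath tpath_eq by blast

lemma on_path_same: "x \<in> V \<Longrightarrow> on_path V adj w x x \<Longrightarrow> w = x"
  using tpath_eq[of "[x]" x x] on_path_iff[of x x w] by (simp add: is_path_successively)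

lemma leaf_neighbours:
  assumes "x \<in> leaves V adj" "a \<in> neighbours V adj x" "b \<in> neighbours V adj x"
  shows "a = b"
proof -
  obtain z where "neighbours V adj x = {z}" using assms(1) unfolding leaves_def by (auto simp: card_1_singleton_iff)
  then show ?thesis using assms(2,3) by auto
qed

lemma leaves_in_V: "leaves V adj \<subseteq> V"
  unfolding leaves_def by blast

end

section \<open>Rooted trees: parents, ancestors and separating edges\<close>

text \<open>The directed edges are exactly the
  pairs \<open>(parent v, v)\<close>, so edges are indexed by the non-root vertices.\<close>

locale rooted_tree = tree_graph V adj for V :: "'v set" and adj +
  fixes r :: 'v
  assumes root_in_V: "r \<in> V"
begin

definition anc :: "'v \<Rightarrow> 'v set" where "anc x = set (tpath r x)"
definition parent :: "'v \<Rightarrow> 'v" where "parent x = last (butlast (tpath r x))"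
definition depth :: "'v \<Rightarrow> nat" where "depth x = length (tpath r x)"

lemmas tpath_root = tpath_props[OF root_in_V]

lemma anc_self: "x \<in> V \<Longrightarrow> x \<in> anc x"
  using tpath_root[of x] unfolding anc_def by (metis last_in_set)

lemma anc_root: "x \<in> V \<Longrightarrow> r \<in> anc x"
  using tpath_root[of x] unfolding anc_def by (metis hd_in_set)

lemma anc_in_V: "x \<in> V \<Longrightarrow> anc x \<subseteq> V"
  using tpath_root[of x] unfolding anc_def by blast

lemma tpath_root_root: "tpath r r = [r]"
  by (rule tpath_eq) (simp add: is_path_successively root_in_V)

lemma anc_of_root: "anc r = {r}"
  by (simp add: anc_def tpath_root_root)

lemma tpath_root_inj: "x \<in> V \<Longrightarrow> y \<in> V \<Longrightarrow> tpath r x = tpath r y \<Longrightarrow> x = y"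
  using tpath_root(3) by metis

lemma tpath_prefix:
  assumes y: "y \<in> V" and k: "k < length (tpath r y)"
  shows "tpath r (tpath r y ! k) = take (Suc k) (tpath r y)"
proof (rule tpath_eq)
  let ?ps = "tpath r y"
  have "successively adj (take (Suc k) ?ps @ drop (Suc k) ?ps)" using tpath_root(6)[OF y] by simp
  then have "successively adj (take (Suc k) ?ps)" unfolding successively_append_iff by blast
  moreover have "last (take (Suc k) ?ps) = ?ps ! k" using k by (simp add: take_Suc_conv_app_nth)
  moreover have "hd (take (Suc k) ?ps) = r" using tpath_root(1,2)[OF y] by (simp add: hd_take)
  moreover have "distinct (take (Suc k) ?ps)" using tpath_root(4)[OF y] by simp
  moreover have "set (take (Suc k) ?ps) \<subseteq> V" using tpath_root(5)[OF y] by (meson order_trans set_take_subset)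
  ultimately show "is_path V adj (take (Suc k) ?ps) r (?ps ! k)"
    using tpath_root(1)[OF y] by (simp add: is_path_successively)
qed

lemma parent:
  assumes x: "x \<in> V" and xr: "x \<noteq> r"
  shows "parent x \<in> V" "tpath r x = tpath r (parent x) @ [x]" "adj (parent x) x"
    "depth (parent x) < depth x"
proof -
  let ?ps = "tpath r x"
  have len: "length ?ps \<ge> 2"
  proof (rule ccontr)
    assume "\<not> ?thesis"
    moreover have "length ?ps \<noteq> 0" using tpath_root(1)[OF x] by simp
    ultimately have "length ?ps = 1" by linarith
    then have "hd ?ps = last ?ps" by (cases ?ps) auto
    then show False using tpath_root(2,3)[OF x] xr by simp
  qed
  have nb: "butlast ?ps \<noteq> []" using len by (cases ?ps rule: rev_cases) auto
  have pk: "parent x = ?ps ! (length ?ps - 2)"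
    unfolding parent_def using len by (simp add: last_conv_nth[OF nb] nth_butlast numeral_2_eq_2)
  have pre: "tpath r (parent x) = butlast ?ps"
    unfolding pk using len
    by (subst tpath_prefix[OF x]) (auto simp: butlast_conv_take Suc_diff_Suc numeral_2_eq_2)
  have eq: "?ps = butlast ?ps @ [x]" using tpath_root(1,3)[OF x] by (metis append_butlast_last_id)
  show "tpath r x = tpath r (parent x) @ [x]" using pre eq by simp
  show "parent x \<in> V" using pk len tpath_root(5)[OF x] by (simp add: subset_iff)
  have "successively adj (butlast ?ps @ [x])" using eq tpath_root(6)[OF x] by metis
  then show "adj (parent x) x" using nb unfolding successively_append_iff by (simp add: parent_def)
  show "depth (parent x) < depth x" unfolding depth_def pre using len by simp
qed

lemma anc_parent: "x \<in> V \<Longrightarrow> x \<noteq> r \<Longrightarrow> anc x = insert x (anc (parent x)) \<and> x \<notin> anc (parent x)"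
  using parent(2)[of x] tpath_root(4)[of x] unfolding anc_def by auto

lemma anc_prefix:
  assumes y: "y \<in> V" and v: "v \<in> anc y"
  shows "\<exists>k < length (tpath r y). v = tpath r y ! k \<and> tpath r v = take (Suc k) (tpath r y)"
proof -
  obtain k where "k < length (tpath r y)" "v = tpath r y ! k"
    using v unfolding anc_def by (metis in_set_conv_nth)
  then show ?thesis using tpath_prefix[OF y] by blast
qed

lemma anc_depth:
  assumes y: "y \<in> V" and v: "v \<in> anc y" and ne: "v \<noteq> y"
  shows "depth v < depth y"
proof -
  obtain k where k: "k < length (tpath r y)" "v = tpath r y ! k" "tpath r v = take (Suc k) (tpath r y)"
    using anc_prefix[OF y v] by blast
  have "k \<noteq> length (tpath r y) - 1" using k ne tpath_root(1,3)[OF y] by (metis last_conv_nth)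
  then show ?thesis unfolding depth_def k(3) using k(1) by simp
qed

lemma anc_antisym: "x \<in> V \<Longrightarrow> y \<in> V \<Longrightarrow> x \<in> anc y \<Longrightarrow> y \<in> anc x \<Longrightarrow> x = y"
  by (metis anc_depth less_asym)

lemma child_of:
  assumes u: "u \<in> V" and uv: "adj u v" and nv: "v \<notin> anc u"
  shows "v \<noteq> r \<and> parent v = u"
proof -
  have v: "v \<in> V" using adj_in_V uv by blast
  have "is_path V adj (tpath r u @ [v]) r v"
    using tpath_root[OF u] nv uv v unfolding anc_def by (auto simp: is_path_successively successively_append_iff)
  then have e: "tpath r v = tpath r u @ [v]" by (rule tpath_eq)
  have vr: "v \<noteq> r" using nv anc_root[OF u] by blast
  then have "tpath r (parent v) = tpath r u" using parent(2)[OF v vr] e by simp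
  then show ?thesis using tpath_root_inj parent(1)[OF v vr] u vr by blast
qed

lemma adj_parent_cases: "adj a b \<Longrightarrow> (b \<noteq> r \<and> parent b = a) \<or> (a \<noteq> r \<and> parent a = b)"
proof -
  assume ab: "adj a b"
  then have a: "a \<in> V" and b: "b \<in> V" using adj_in_V by auto
  show ?thesis
  proof (cases "b \<in> anc a")
    case False then show ?thesis using child_of[OF a ab] by blast
  next
    case True
    have "a \<noteq> b" using ab adj_irrefl by blast
    then have "a \<notin> anc b" using anc_antisym[OF a b] True by blast
    then show ?thesis using child_of[OF b adj_sym[OF ab]] by blast
  qed
qed

lemma dedges_eq: "dedges V adj r = (\<lambda>v. (parent v, v)) ` (V - {r})"
proof
  show "dedges V adj r \<subseteq> (\<lambda>v. (parent v, v)) ` (V - {r})"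
  proof
    fix e assume "e \<in> dedges V adj r"
    then obtain u v where e: "e = (u, v)" and uv: "adj u v" and op: "on_path V adj u r v"
      unfolding dedges_def by blast
    have u: "u \<in> V" and v: "v \<in> V" using adj_in_V uv by auto
    have "u \<in> anc v" using op on_path_iff[OF root_in_V v] unfolding anc_def by blast
    moreover have "u \<noteq> v" using uv adj_irrefl by blast
    ultimately have "v \<notin> anc u" using anc_antisym[OF u v] by blast
    then show "e \<in> (\<lambda>v. (parent v, v)) ` (V - {r})" using child_of[OF u uv] e v by auto
  qed
next
  show "(\<lambda>v. (parent v, v)) ` (V - {r}) \<subseteq> dedges V adj r"
  proof
    fix e assume "e \<in> (\<lambda>v. (parent v, v)) ` (V - {r})"
    then obtain v where e: "e = (parent v, v)" and v: "v \<in> V" "v \<noteq> r" by blast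
    have "parent v \<in> anc v" using anc_parent[OF v] anc_self parent(1)[OF v] by blast
    then have "on_path V adj (parent v) r v" using on_path_iff[OF root_in_V v(1)] unfolding anc_def by blast
    then show "e \<in> dedges V adj r" using e parent(3)[OF v] unfolding dedges_def by blast
  qed
qed

text \<open>The edge \<open>(parent v, v)\<close> lies between \<open>x\<close> and \<open>y\<close> iff exactly one of them lies in the
  subtree below \<open>v\<close>.\<close>

definition separates :: "'v \<Rightarrow> 'v \<Rightarrow> 'v \<Rightarrow> bool" where
  "separates v x y \<longleftrightarrow> (v \<in> anc x) \<noteq> (v \<in> anc y)"

lemma leaving_edge:
  assumes v: "v \<in> V" "v \<noteq> r" and ab: "adj a b" and va: "v \<in> anc a" and vb: "v \<notin> anc b"
  shows "a = v \<and> b = parent v"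
  using adj_parent_cases[OF ab]
proof
  assume "b \<noteq> r \<and> parent b = a"
  then have "anc b = insert b (anc a)" using anc_parent adj_in_V[OF ab] by blast
  then show ?thesis using va vb by blast
next
  assume h: "a \<noteq> r \<and> parent a = b"
  then have "anc a = insert a (anc b)" using anc_parent adj_in_V[OF ab] by blast
  then show ?thesis using va vb h by auto
qed

lemma separated_walk:
  assumes w: "successively adj ps" and s: "set ps \<subseteq> V" and ne: "ps \<noteq> []"
    and v: "v \<in> V" "v \<noteq> r" and sep: "separates v (hd ps) (last ps)"
  shows "v \<in> set ps \<and> parent v \<in> set ps"
proof -
  have exits: "v \<in> set qs \<and> parent v \<in> set qs"
    if walk: "successively adj qs" and nonempty: "qs \<noteq> []" and starts: "v \<in> anc (hd qs)"
      and ends: "v \<notin> anc (last qs)" for qs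
  proof -
    obtain ys a b zs where qs: "qs = ys @ a # b # zs" and a: "v \<in> anc a" and b: "v \<notin> anc b"
      using exit_point[of qs "\<lambda>w. v \<in> anc w"] nonempty starts ends by blast
    have "adj a b" using walk unfolding qs successively_append_iff by simp
    then have "a = v \<and> b = parent v" using leaving_edge[OF v _ a b] by blast
    then show ?thesis unfolding qs by simp
  qed
  show ?thesis
  proof (cases "v \<in> anc (hd ps)")
    case True
    then have "v \<notin> anc (last ps)" using sep unfolding separates_def by simp
    then show ?thesis using exits[OF w ne True] by blast
  next
    case False
    then have "v \<in> anc (hd (rev ps))" "v \<notin> anc (last (rev ps))"
      using sep ne unfolding separates_def by (simp_all add: hd_rev last_rev)
    moreover have "successively adj (rev ps)" using w successively_rev_adj by blast
    ultimately show ?thesis using exits[of "rev ps"] ne by simp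
  qed
qed

lemma parent_neq: "v \<in> V \<Longrightarrow> v \<noteq> r \<Longrightarrow> parent v \<noteq> v"
  using parent(3) adj_irrefl by metis

text \<open>Subtrees are convex: a path between two vertices on the same side of an edge stays on
  that side, since otherwise it would traverse the edge twice.\<close>

lemma convex_walk:
  assumes w: "successively adj ps" and d: "distinct ps" and s: "set ps \<subseteq> V" and ne: "ps \<noteq> []"
    and v: "v \<in> V" "v \<noteq> r" and nsep: "\<not> separates v (hd ps) (last ps)" and wi: "w \<in> set ps"
  shows "\<not> separates v (hd ps) w"
proof
  assume sep: "separates v (hd ps) w"
  obtain p1 p2 where ps: "ps = p1 @ w # p2" using wi split_list by metis
  have walk1: "successively adj (p1 @ [w])" and walk2: "successively adj (w # p2)"
    using w unfolding ps by (simp_all add: successively_append_iff flip: append_Cons)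
  have hd1: "hd (p1 @ [w]) = hd ps" using ps by (cases p1) auto
  have last2: "last (w # p2) = last ps" using ps by (cases p2 rule: rev_cases) auto
  have sep2: "separates v w (last ps)" using sep nsep unfolding separates_def by blast
  have "v \<in> set (p1 @ [w]) \<and> parent v \<in> set (p1 @ [w])"
    by (rule separated_walk[OF walk1 _ _ v]) (use s ps sep hd1 in auto)
  moreover have "v \<in> set (w # p2) \<and> parent v \<in> set (w # p2)"
    by (rule separated_walk[OF walk2 _ _ v]) (use s ps sep2 last2 in auto)
  moreover have "set (p1 @ [w]) \<inter> set (w # p2) = {w}" using d unfolding ps by auto
  ultimately show False using parent_neq[OF v] by (metis IntI singletonD)
qed

lemma convex_path:
  assumes x: "x \<in> V" and y: "y \<in> V" and v: "v \<in> V" "v \<noteq> r" and nsep: "\<not> separates v x y"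
    and op: "on_path V adj w x y"
  shows "\<not> separates v x w"
proof -
  have "\<not> separates v (hd (tpath x y)) w"
    by (rule convex_walk[OF tpath_props(6,4,5,1)[OF x y] v])
      (use nsep op on_path_iff[OF x y] tpath_props(2,3)[OF x y] in simp_all)
  then show ?thesis by (simp add: tpath_props(2)[OF x y])
qed

lemma separating_path:
  assumes x: "x \<in> V" and y: "y \<in> V" and v: "v \<in> V" "v \<noteq> r" and sep: "separates v x y"
  shows "on_path V adj v x y \<and> on_path V adj (parent v) x y"
  using separated_walk[OF tpath_props(6,5,1)[OF x y] v] tpath_props(2,3)[OF x y] sep on_path_iff[OF x y]
  by simp

lemma child_towards:
  assumes y: "y \<in> V" and xa: "x \<in> anc y" and ne: "x \<noteq> y"
  shows "\<exists>c. c \<in> V \<and> c \<noteq> r \<and> parent c = x \<and> c \<in> anc y"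
proof -
  obtain k where k: "k < length (tpath r y)" "x = tpath r y ! k" "tpath r x = take (Suc k) (tpath r y)"
    using anc_prefix[OF y xa] by blast
  have k1: "Suc k < length (tpath r y)"
  proof (rule ccontr)
    assume "\<not> ?thesis"
    then have "k = length (tpath r y) - 1" using k(1) by simp
    then show False using k(2) ne tpath_root(1,3)[OF y] by (metis last_conv_nth)
  qed
  define c where "c = tpath r y ! Suc k"
  have cV: "c \<in> V" using k1 tpath_root(5)[OF y] unfolding c_def by (meson nth_mem subsetD)
  have tc: "tpath r c = tpath r x @ [c]"
    using tpath_prefix[OF y k1] k(3) k1 unfolding c_def by (simp add: take_Suc_conv_app_nth)
  have xV: "x \<in> V" using anc_in_V[OF y] xa by blast
  have cr: "c \<noteq> r" using tc tpath_root_root tpath_root(1)[OF xV] by (cases "tpath r x") auto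
  have "tpath r (parent c) = tpath r x" using parent(2)[OF cV cr] tc by simp
  then have "parent c = x" using tpath_root_inj parent(1)[OF cV cr] xV by blast
  moreover have "c \<in> anc y" using k1 unfolding anc_def c_def by simp
  ultimately show ?thesis using cV cr by blast
qed

lemma leaf_no_child:
  assumes i: "i \<in> leaves V adj" "i \<noteq> r" and c: "c \<in> V" "c \<noteq> r" "parent c = i"
  shows False
proof -
  have iV: "i \<in> V" using i leaves_in_V by blast
  have "c \<in> neighbours V adj i" using parent(3)[OF c(1,2)] c unfolding neighbours_def by simp
  moreover have "parent i \<in> neighbours V adj i"
    using parent(1,3)[OF iV i(2)] adj_sym unfolding neighbours_def by blast
  ultimately have "c = parent i" using leaf_neighbours[OF i(1)] by blast
  then show False using parent(4)[OF iV i(2)] parent(4)[OF c(1,2)] c(3) by simp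
qed

lemma leaf_not_anc:
  assumes i: "i \<in> leaves V adj" "i \<noteq> r" and j: "j \<in> V" "j \<noteq> i"
  shows "i \<notin> anc j"
  using child_towards[OF j(1) _ j(2)[symmetric]] leaf_no_child[OF i] by blast

lemma root_child_anc:
  assumes rl: "r \<in> leaves V adj" and c: "c \<in> V" "c \<noteq> r" "parent c = r" and x: "x \<in> V" "x \<noteq> r"
  shows "c \<in> anc x"
proof -
  obtain d where d: "d \<in> V" "d \<noteq> r" "parent d = r" "d \<in> anc x"
    using child_towards[OF x(1) anc_root[OF x(1)] x(2)[symmetric]] by blast
  have "c \<in> neighbours V adj r" "d \<in> neighbours V adj r"
    using parent(3) c d unfolding neighbours_def by force+
  then show ?thesis using leaf_neighbours[OF rl] d(4) by blast
qed

lemma two_leaves: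
  assumes rl: "r \<in> leaves V adj" and c: "c \<in> V" "c \<noteq> r" "parent c = r" and cl: "c \<in> leaves V adj"
  shows "card (leaves V adj) \<le> 2"
proof -
  have "leaves V adj \<subseteq> {r, c}"
  proof
    fix x assume xl: "x \<in> leaves V adj"
    show "x \<in> {r, c}"
    proof (rule ccontr)
      assume "x \<notin> {r, c}"
      then show False
        using root_child_anc[OF rl c] leaf_not_anc[OF cl c(2)] xl leaves_in_V by blast
    qed
  qed
  then have "card (leaves V adj) \<le> card {r, c}" by (intro card_mono) auto
  also have "\<dots> \<le> 2" by (simp add: card_insert_if)
  finally show ?thesis .
qed

end

section \<open>Hendy's formula for the Fourier transform of the leaf distribution\<close>

text \<open>Summing out the internal states of \<open>p\<close> and reparametrising the states by their
  increments along the edges, the transform \<open>q\<close> factorises over the edges; the factor of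
  the edge above \<open>v\<close> is the Fourier transform of \<open>f\<^sup>(\<^sup>e\<^sup>)\<close> evaluated at the sum \<open>\<^sup>*g\<^sub>e\<close> of the
  labels of the leaves below \<open>v\<close>.\<close>

context rooted_tree
begin

definition subtree_label :: "('v \<Rightarrow> nuc) \<Rightarrow> 'v \<Rightarrow> nuc" where
  "subtree_label g v = (\<Sum>x\<in>{x\<in>leaves V adj. v \<in> anc x}. g x)"

definition root_states :: "('v \<Rightarrow> nuc) set" where
  "root_states = {\<sigma> \<in> V \<rightarrow>\<^sub>E UNIV. \<sigma> r = 0}"

definition weight :: "('v \<times> 'v \<Rightarrow> nuc \<Rightarrow> real) \<Rightarrow> ('v \<Rightarrow> nuc) \<Rightarrow> real" where
  "weight psi \<sigma> = (\<Prod>v\<in>V-{r}. Pm psi (parent v, v) (\<sigma> (parent v)) (\<sigma> v))"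

lemma finite_root_states: "finite root_states"
  unfolding root_states_def using finite_V by (intro finite_subset[OF _ finite_PiE]) auto

lemma finite_leaves: "finite (leaves V adj)"
  using finite_V leaves_in_V finite_subset by blast

lemma pprob_weight:
  "pprob V adj r psi h = (\<Sum>\<sigma>\<in>{\<sigma>\<in>root_states. \<forall>x\<in>leaves V adj. \<sigma> x = h x}. weight psi \<sigma>)"
proof -
  have inj: "inj_on (\<lambda>v. (parent v, v)) (V - {r})" by (rule inj_onI) auto
  have "(\<Prod>e\<in>dedges V adj r. Pm psi e (\<sigma> (fst e)) (\<sigma> (snd e))) = weight psi \<sigma>" for \<sigma>
    unfolding dedges_eq weight_def by (simp add: prod.reindex[OF inj])
  then show ?thesis unfolding pprob_def root_states_def by (simp add: conj_assoc)
qed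

lemma qfour_root_states:
  "qfour V adj r psi g = (\<Sum>\<sigma>\<in>root_states. (\<Prod>x\<in>leaves V adj. chi (g x) (\<sigma> x)) * weight psi \<sigma>)"
proof -
  let ?L = "leaves V adj"
  let ?f = "\<lambda>\<sigma>. (\<Prod>x\<in>?L. chi (g x) (\<sigma> x)) * weight psi \<sigma>"
  have "qfour V adj r psi g = (\<Sum>h\<in>?L \<rightarrow>\<^sub>E UNIV. \<Sum>\<sigma>\<in>{\<sigma>\<in>root_states. restrict \<sigma> ?L = h}. ?f \<sigma>)"
    unfolding qfour_def
  proof (intro sum.cong refl)
    fix h :: "'v \<Rightarrow> nuc" assume h: "h \<in> ?L \<rightarrow>\<^sub>E UNIV"
    have fibre: "{\<sigma>\<in>root_states. restrict \<sigma> ?L = h} = {\<sigma>\<in>root_states. \<forall>x\<in>?L. \<sigma> x = h x}"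
      using h by (auto simp: restrict_def PiE_def extensional_def fun_eq_iff)
    show "(\<Prod>x\<in>?L. chi (g x) (h x)) * pprob V adj r psi h = (\<Sum>\<sigma>\<in>{\<sigma>\<in>root_states. restrict \<sigma> ?L = h}. ?f \<sigma>)"
      unfolding pprob_weight fibre sum_distrib_left by (intro sum.cong refl) auto
  qed
  also have "\<dots> = (\<Sum>\<sigma>\<in>root_states. ?f \<sigma>)"
    by (rule sum.group[OF finite_root_states]) (use finite_leaves in \<open>auto intro: finite_PiE\<close>)
  finally show ?thesis .
qed

text \<open>States with the root fixed correspond bijectively to arbitrary increments on the
  edges: a state is recovered by summing the increments along the path from the root.\<close>

definition integrate :: "('v \<Rightarrow> nuc) \<Rightarrow> 'v \<Rightarrow> nuc" where
  "integrate \<tau> = (\<lambda>x\<in>V. \<Sum>v\<in>anc x - {r}. \<tau> v)"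

definition increments :: "('v \<Rightarrow> nuc) \<Rightarrow> 'v \<Rightarrow> nuc" where
  "increments \<sigma> = (\<lambda>v\<in>V - {r}. \<sigma> v - \<sigma> (parent v))"

lemma sum_anc_parent:
  assumes x: "x \<in> V" "x \<noteq> r"
  shows "(\<Sum>v\<in>anc x - {r}. f v) = f x + (\<Sum>v\<in>anc (parent x) - {r}. f v)"
proof -
  have "anc x - {r} = insert x (anc (parent x) - {r})" "x \<notin> anc (parent x) - {r}"
    using anc_parent[OF x] x(2) by blast+
  moreover have "finite (anc (parent x) - {r})"
    using anc_in_V[OF parent(1)[OF x]] finite_V finite_subset by blast
  ultimately show ?thesis by simp
qed

lemma integrate_increment: "v \<in> V \<Longrightarrow> v \<noteq> r \<Longrightarrow> integrate \<tau> v - integrate \<tau> (parent v) = \<tau> v"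
  using sum_anc_parent[of v \<tau>] parent(1)[of v] by (simp add: integrate_def)

lemma sum_anc_telescope:
  fixes \<sigma> :: "'v \<Rightarrow> 'a :: ab_group_add"
  assumes "\<sigma> r = 0"
  shows "x \<in> V \<Longrightarrow> (\<Sum>v\<in>anc x - {r}. \<sigma> v - \<sigma> (parent v)) = \<sigma> x"
proof (induction "depth x" arbitrary: x rule: less_induct)
  case less
  show ?case
  proof (cases "x = r")
    case True then show ?thesis using assms by (simp add: anc_of_root)
  next
    case False
    then show ?thesis
      using sum_anc_parent[OF less.prems False, of "\<lambda>v. \<sigma> v - \<sigma> (parent v)"]
        less.hyps[OF parent(4,1)[OF less.prems False]]
      by simp
  qed
qed

lemma integrate_increments: "\<sigma> \<in> root_states \<Longrightarrow> integrate (increments \<sigma>) = \<sigma>"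
proof
  fix x assume s: "\<sigma> \<in> root_states"
  show "integrate (increments \<sigma>) x = \<sigma> x"
  proof (cases "x \<in> V")
    case True
    have "(\<Sum>v\<in>anc x - {r}. increments \<sigma> v) = (\<Sum>v\<in>anc x - {r}. \<sigma> v - \<sigma> (parent v))"
      using anc_in_V[OF True] by (intro sum.cong refl) (auto simp: increments_def)
    then show ?thesis
      using sum_anc_telescope[of \<sigma> x] s True by (simp add: integrate_def root_states_def)
  next
    case False
    then show ?thesis using s by (simp add: integrate_def root_states_def PiE_def extensional_def)
  qed
qed

lemma increments_integrate: "\<tau> \<in> (V - {r}) \<rightarrow>\<^sub>E UNIV \<Longrightarrow> increments (integrate \<tau>) = \<tau>"
  by (auto simp: increments_def integrate_increment PiE_def extensional_def fun_eq_iff)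

lemma integrate_root_states: "integrate \<tau> \<in> root_states"
  unfolding root_states_def integrate_def using root_in_V by (simp add: anc_of_root)

lemma leaf_character_increments:
  "(\<Prod>x\<in>leaves V adj. chi (g x) (integrate \<tau> x)) = (\<Prod>v\<in>V-{r}. chi (subtree_label g v) (\<tau> v))"
proof -
  let ?L = "leaves V adj"
  have "(\<Prod>x\<in>?L. chi (g x) (integrate \<tau> x)) = (\<Prod>x\<in>?L. \<Prod>v\<in>{v\<in>V-{r}. v \<in> anc x}. chi (g x) (\<tau> v))"
  proof (intro prod.cong refl)
    fix x assume "x \<in> ?L"
    then have xV: "x \<in> V" using leaves_in_V by blast
    then have "anc x - {r} = {v\<in>V-{r}. v \<in> anc x}" using anc_in_V by blast
    then show "chi (g x) (integrate \<tau> x) = (\<Prod>v\<in>{v\<in>V-{r}. v \<in> anc x}. chi (g x) (\<tau> v))"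
      using xV finite_V by (simp add: integrate_def chi_sum_right)
  qed
  also have "\<dots> = (\<Prod>v\<in>V-{r}. \<Prod>x\<in>{x\<in>?L. v \<in> anc x}. chi (g x) (\<tau> v))"
    using finite_leaves finite_V by (intro prod.swap_restrict) auto
  also have "\<dots> = (\<Prod>v\<in>V-{r}. chi (subtree_label g v) (\<tau> v))"
    unfolding subtree_label_def using finite_leaves by (intro prod.cong refl) (simp add: chi_sum_left)
  finally show ?thesis .
qed

theorem hendy_formula:
  "qfour V adj r psi g = (\<Prod>v\<in>V-{r}. exp (psi_hat psi (parent v, v) (subtree_label g v)))"
proof -
  let ?f = "\<lambda>\<sigma>. (\<Prod>x\<in>leaves V adj. chi (g x) (\<sigma> x)) * weight psi \<sigma>"
  let ?F = "\<lambda>v. ifourier (\<lambda>k. exp (psi_hat psi (parent v, v) k))"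
  have "qfour V adj r psi g = (\<Sum>\<tau>\<in>(V - {r}) \<rightarrow>\<^sub>E UNIV. ?f (integrate \<tau>))"
    unfolding qfour_root_states
  proof (rule sum.reindex_bij_witness[where i = integrate and j = increments])
    show "\<And>\<sigma>. \<sigma> \<in> root_states \<Longrightarrow> integrate (increments \<sigma>) = \<sigma>" by (rule integrate_increments)
    show "\<And>\<tau>. \<tau> \<in> (V - {r}) \<rightarrow>\<^sub>E UNIV \<Longrightarrow> increments (integrate \<tau>) = \<tau>" by (rule increments_integrate)
    show "\<And>\<sigma>. increments \<sigma> \<in> (V - {r}) \<rightarrow>\<^sub>E UNIV" by (simp add: increments_def)
    show "\<And>\<tau>. integrate \<tau> \<in> root_states" by (rule integrate_root_states)
    show "\<And>\<sigma>. \<sigma> \<in> root_states \<Longrightarrow> ?f (integrate (increments \<sigma>)) = ?f \<sigma>"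
      by (simp only: integrate_increments)
  qed
  also have "\<dots> = (\<Sum>\<tau>\<in>(V - {r}) \<rightarrow>\<^sub>E UNIV. \<Prod>v\<in>V-{r}. chi (subtree_label g v) (\<tau> v) * ?F v (\<tau> v))"
  proof (intro sum.cong refl)
    fix \<tau> :: "'v \<Rightarrow> nuc"
    have "weight psi (integrate \<tau>) = (\<Prod>v\<in>V-{r}. ?F v (\<tau> v))"
      unfolding weight_def Pm_convolution by (intro prod.cong refl) (simp add: integrate_increment)
    then show "?f (integrate \<tau>) = (\<Prod>v\<in>V-{r}. chi (subtree_label g v) (\<tau> v) * ?F v (\<tau> v))"
      by (simp add: leaf_character_increments prod.distrib)
  qed
  also have "\<dots> = (\<Prod>v\<in>V-{r}. \<Sum>t\<in>UNIV. chi (subtree_label g v) t * ?F v t)"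
    using finite_V by (intro prod_sum_PiE[symmetric]) auto
  also have "\<dots> = (\<Prod>v\<in>V-{r}. exp (psi_hat psi (parent v, v) (subtree_label g v)))"
    by (simp add: fourier_ifourier)
  finally show ?thesis .
qed

end

text \<open>All labellings occurring in the ratios \<open>R\<^sub>e\<close> put the same letter \<open>h\<close> on two leaves and \<open>A\<close>
  elsewhere.  For these, Hendy's formula shows that \<open>q\<close> is the exponential of a sum of
  eigenvalues along the path joining the two leaves.\<close>

definition pair_label :: "'v \<Rightarrow> 'v \<Rightarrow> nuc \<Rightarrow> 'v \<Rightarrow> nuc" where
  "pair_label x y h = (\<lambda>z. if z = x \<or> z = y then h else 0)"

lemma lab3_pair_label:
  assumes "i \<noteq> j" "i \<noteq> k" "j \<noteq> k"
  shows "lab3 i j k h h 0 = pair_label i j h" "lab3 i j k h 0 h = pair_label i k h"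
    "lab3 i j k 0 h h = pair_label j k h"
  using assms by (auto simp: lab3_def pair_label_def fun_eq_iff)

lemma lab4_pair_label:
  assumes "i \<noteq> j" "i \<noteq> k" "i \<noteq> l" "j \<noteq> k" "j \<noteq> l" "k \<noteq> l"
  shows "lab4 i j k l h 0 h 0 = pair_label i k h" "lab4 i j k l 0 h 0 h = pair_label j l h"
    "lab4 i j k l h h 0 0 = pair_label i j h" "lab4 i j k l 0 0 h h = pair_label k l h"
  using assms by (auto simp: lab4_def pair_label_def fun_eq_iff)

context rooted_tree
begin

definition path_weight :: "('v \<times> 'v \<Rightarrow> nuc \<Rightarrow> real) \<Rightarrow> nuc \<Rightarrow> 'v \<Rightarrow> 'v \<Rightarrow> real" where
  "path_weight psi h x y = (\<Sum>v\<in>V-{r}. if separates v x y then psi_hat psi (parent v, v) h else 0)"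

lemma path_weight_same [simp]: "path_weight psi h x x = 0"
  by (simp add: path_weight_def separates_def)

lemma subtree_label_pair:
  assumes "x \<in> leaves V adj" "y \<in> leaves V adj" "x \<noteq> y"
  shows "subtree_label (pair_label x y h) v = (if separates v x y then h else 0)"
proof -
  let ?S = "{z\<in>leaves V adj. v \<in> anc z}"
  have "pair_label x y h = (\<lambda>z. (if z = x then h else 0) + (if z = y then h else 0))"
    using assms(3) by (auto simp: pair_label_def fun_eq_iff)
  then have "subtree_label (pair_label x y h) v = (if x \<in> ?S then h else 0) + (if y \<in> ?S then h else 0)"
    unfolding subtree_label_def using finite_leaves by (simp add: sum.distrib sum.delta)
  also have "\<dots> = (if separates v x y then h else 0)"
    using assms(1,2) by (auto simp: separates_def)
  finally show ?thesis .
qed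

lemma qfour_pair_label:
  assumes "x \<in> leaves V adj" "y \<in> leaves V adj" "x \<noteq> y"
  shows "qfour V adj r psi (pair_label x y h) = exp (path_weight psi h x y)"
proof -
  have "qfour V adj r psi (pair_label x y h)
      = (\<Prod>v\<in>V-{r}. exp (if separates v x y then psi_hat psi (parent v, v) h else 0))"
    unfolding hendy_formula subtree_label_pair[OF assms] by (intro prod.cong refl) simp
  then show ?thesis unfolding path_weight_def using finite_V by (simp add: exp_sum)
qed

text \<open>The edge above \<open>v\<^sub>0\<close> is the central edge of the quartet \<open>ab|cd\<close>: it separates \<open>a\<close> from
  \<open>c\<close> but neither pair, no other edge lies on both paths \<open>a\<midarrow>b\<close> and \<open>c\<midarrow>d\<close>, and every other edge
  separating \<open>a\<close> from \<open>c\<close> lies on one of them.\<close>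

definition central_edge :: "'v \<Rightarrow> 'v \<Rightarrow> 'v \<Rightarrow> 'v \<Rightarrow> 'v \<Rightarrow> bool" where
  "central_edge v0 a b c d \<longleftrightarrow> v0 \<in> V - {r}
     \<and> separates v0 a c \<and> \<not> separates v0 a b \<and> \<not> separates v0 c d
     \<and> (\<forall>v\<in>V-{r}. v \<noteq> v0 \<longrightarrow> \<not> (separates v a b \<and> separates v c d)
                          \<and> (separates v a c \<longrightarrow> separates v a b \<or> separates v c d))"

text \<open>Four-point identity: the central edge is counted twice in the paths \<open>a\<midarrow>c\<close>, \<open>b\<midarrow>d\<close> and
  not at all in \<open>a\<midarrow>b\<close>, \<open>c\<midarrow>d\<close>; every other edge is counted equally often on both sides.\<close>

lemma path_weight_four_point:
  assumes "central_edge v0 a b c d"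
  shows "path_weight psi h a c + path_weight psi h b d
       = 2 * psi_hat psi (parent v0, v0) h + (path_weight psi h a b + path_weight psi h c d)"
proof -
  let ?l = "\<lambda>v. psi_hat psi (parent v, v) h"
  let ?w = "\<lambda>x y v. if separates v x y then ?l v else 0"
  have "path_weight psi h a c + path_weight psi h b d - (path_weight psi h a b + path_weight psi h c d)
      = (\<Sum>v\<in>V-{r}. ?w a c v + ?w b d v - (?w a b v + ?w c d v))"
    unfolding path_weight_def by (simp add: sum.distrib sum_subtractf)
  also have "\<dots> = (\<Sum>v\<in>V-{r}. if v = v0 then 2 * ?l v else 0)"
  proof (intro sum.cong refl)
    fix v assume "v \<in> V - {r}"
    then show "?w a c v + ?w b d v - (?w a b v + ?w c d v) = (if v = v0 then 2 * ?l v else 0)"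
      using assms unfolding central_edge_def separates_def
      by (cases "v \<in> anc a"; cases "v \<in> anc b"; cases "v \<in> anc c"; cases "v \<in> anc d"; auto)
  qed
  also have "\<dots> = 2 * ?l v0" using assms finite_V by (simp add: central_edge_def)
  finally show ?thesis by simp
qed

end

section \<open>Each edge is the central edge of its chosen quartet\<close>

context rooted_tree
begin

lemma central_edge_pendant:
  assumes "v0 \<in> V - {r}" "separates v0 i j" "separates v0 i k"
    and "\<forall>v\<in>V-{r}. v \<noteq> v0 \<longrightarrow> \<not> (separates v i j \<and> separates v i k)"
  shows "central_edge v0 i i j k"
  using assms unfolding central_edge_def separates_def by blast

lemma central_edge_leaf_child:
  assumes rl: "r \<in> leaves V adj" and m3: "card (leaves V adj) \<ge> 3"
    and v0: "v0 \<in> leaves V adj" "v0 \<noteq> r"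
    and j: "j \<in> leaves V adj" "j \<noteq> v0" and k: "k \<in> leaves V adj" "k \<noteq> v0"
    and op: "on_path V adj (parent v0) j k"
  shows "j \<noteq> k \<and> central_edge v0 v0 v0 j k"
proof
  have v0V: "v0 \<in> V" and jV: "j \<in> V" and kV: "k \<in> V" using v0 j k leaves_in_V by auto
  show "j \<noteq> k"
  proof
    assume "j = k"
    then have pj: "parent v0 = j" using on_path_same[OF jV] op by simp
    show False
    proof (cases "parent v0 = r")
      case True
      then show False using two_leaves[OF rl v0V v0(2) True v0(1)] m3 by simp
    next
      case False
      then show False using leaf_no_child[of "parent v0" v0] pj j v0V v0(2) by blast
    qed
  qed
  have sep_j: "separates v0 v0 j" and sep_k: "separates v0 v0 k"
    using leaf_not_anc[OF v0] anc_self[OF v0V] jV kV j(2) k(2) unfolding separates_def by auto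
  have "\<not> (separates v v0 j \<and> separates v v0 k)" if v: "v \<in> V - {r}" "v \<noteq> v0" for v
  proof
    assume sep: "separates v v0 j \<and> separates v v0 k"
    then have "\<not> separates v j k" unfolding separates_def by blast
    then have "\<not> separates v j (parent v0)" using convex_path[OF jV kV _ _ _ op] v by blast
    moreover have "(v \<in> anc v0) = (v \<in> anc (parent v0))" using anc_parent[OF v0V v0(2)] v by blast
    ultimately show False using sep unfolding separates_def by blast
  qed
  then show "central_edge v0 v0 v0 j k"
    using central_edge_pendant sep_j sep_k v0V v0(2) by blast
qed

lemma central_edge_root_child:
  assumes rl: "r \<in> leaves V adj" and v0: "v0 \<in> V" "v0 \<noteq> r" "parent v0 = r" "v0 \<notin> leaves V adj"
    and j: "j \<in> leaves V adj" "j \<noteq> r" and k: "k \<in> leaves V adj" "k \<noteq> r"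
    and op: "on_path V adj v0 j k"
  shows "j \<noteq> k \<and> central_edge v0 r r j k"
proof
  have jV: "j \<in> V" and kV: "k \<in> V" using j k leaves_in_V by auto
  show "j \<noteq> k" using on_path_same[OF jV] op v0(4) j(1) by blast
  have anc_r_V: "v \<notin> anc r" if "v \<in> V - {r}" for v using that anc_of_root by simp
  have sep_j: "separates v0 r j" and sep_k: "separates v0 r k"
    using root_child_anc[OF rl v0(1-3)] jV kV j(2) k(2) anc_r_V v0(1,2) unfolding separates_def by auto
  have "\<not> (separates v r j \<and> separates v r k)" if v: "v \<in> V - {r}" "v \<noteq> v0" for v
  proof
    assume "separates v r j \<and> separates v r k"
    then have vjk: "v \<in> anc j" "v \<in> anc k" using anc_r_V[OF v(1)] unfolding separates_def by auto
    then have "\<not> separates v j v0" using convex_path[OF jV kV _ _ _ op] v unfolding separates_def by blast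
    then have "v \<in> anc v0" using vjk unfolding separates_def by blast
    then show False using anc_parent[OF v0(1,2)] v0(3) anc_of_root v by auto
  qed
  then show "central_edge v0 r r j k"
    using central_edge_pendant sep_j sep_k v0 by blast
qed

lemma central_edge_internal:
  assumes v0: "v0 \<in> V" "v0 \<noteq> r" and inner: "parent v0 \<notin> leaves V adj" "v0 \<notin> leaves V adj"
    and leaves: "i \<in> leaves V adj" "j \<in> leaves V adj" "i' \<in> leaves V adj" "j' \<in> leaves V adj"
    and op1: "on_path V adj (parent v0) i j" "\<not> on_path V adj v0 i j"
    and op2: "on_path V adj v0 i' j'" "\<not> on_path V adj (parent v0) i' j'"
  shows "i \<noteq> j \<and> i \<noteq> i' \<and> i \<noteq> j' \<and> j \<noteq> i' \<and> j \<noteq> j' \<and> i' \<noteq> j' \<and> central_edge v0 i j i' j'"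
proof -
  have V: "i \<in> V" "j \<in> V" "i' \<in> V" "j' \<in> V" using leaves leaves_in_V by auto
  have ancv0: "anc v0 = insert v0 (anc (parent v0))" "v0 \<notin> anc (parent v0)"
    using anc_parent[OF v0] by blast+
  have inside: "v0 \<in> anc i'" "v0 \<in> anc j'"
  proof -
    have "\<not> separates v0 i' j'" using separating_path[OF V(3,4) v0] op2(2) by blast
    moreover have "\<not> separates v0 i' v0" using convex_path[OF V(3,4) v0 _ op2(1)] calculation by blast
    ultimately show "v0 \<in> anc i'" "v0 \<in> anc j'" using anc_self[OF v0(1)] unfolding separates_def by auto
  qed
  have outside: "v0 \<notin> anc i" "v0 \<notin> anc j"
  proof -
    have "\<not> separates v0 i j" using separating_path[OF V(1,2) v0] op1(2) by blast
    moreover have "\<not> separates v0 i (parent v0)" using convex_path[OF V(1,2) v0 _ op1(1)] calculation by blast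
    ultimately show "v0 \<notin> anc i" "v0 \<notin> anc j" using ancv0(2) unfolding separates_def by auto
  qed
  have "i \<noteq> j" using on_path_same[OF V(1)] op1(1) inner(1) leaves(1) by blast
  moreover have "i' \<noteq> j'" using on_path_same[OF V(3)] op2(1) inner(2) leaves(3) by blast
  moreover have "central_edge v0 i j i' j'"
    unfolding central_edge_def
  proof (intro conjI ballI impI)
    show "v0 \<in> V - {r}" using v0 by blast
    show "separates v0 i i'" "\<not> separates v0 i j" "\<not> separates v0 i' j'"
      using inside outside unfolding separates_def by auto
  next
    fix v assume v: "v \<in> V - {r}" "v \<noteq> v0"
    then have vV: "v \<in> V" "v \<noteq> r" by auto
    show "\<not> (separates v i j \<and> separates v i' j')"
    proof
      assume "separates v i j \<and> separates v i' j'"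
      then have "on_path V adj v i j" "on_path V adj v i' j'"
        using separating_path[OF V(1,2) vV] separating_path[OF V(3,4) vV] by blast+
      then have "\<not> separates v0 i v" "\<not> separates v0 i' v"
        using convex_path[OF V(1,2) v0] convex_path[OF V(3,4) v0] inside outside
        unfolding separates_def by blast+
      then show False using inside outside unfolding separates_def by blast
    qed
  next
    fix v assume v: "v \<in> V - {r}" "v \<noteq> v0" and sep: "separates v i i'"
    then have vV: "v \<in> V" "v \<noteq> r" by auto
    show "separates v i j \<or> separates v i' j'"
    proof (rule ccontr)
      assume "\<not> (separates v i j \<or> separates v i' j')"
      then have "\<not> separates v i (parent v0)" "\<not> separates v i' v0"
        using convex_path[OF V(1,2) vV _ op1(1)] convex_path[OF V(3,4) vV _ op2(1)] by blast+
      moreover have "(v \<in> anc v0) = (v \<in> anc (parent v0))" using ancv0(1) v(2) by blast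
      ultimately show False using sep unfolding separates_def by blast
    qed
  qed
  ultimately show ?thesis using inside outside by auto
qed

lemma pendant_quartet:
  assumes rl: "r \<in> leaves V adj" and m3: "card (leaves V adj) \<ge> 3" and v0: "v0 \<in> V" "v0 \<noteq> r"
    and pend: "is_pendant V adj (parent v0, v0)" and adm: "admissible V adj (parent v0, v0) s1 s2 s3 s4"
  obtains i where "i \<in> leaves V adj" "i \<noteq> s1" "i \<noteq> s2" "s1 \<noteq> s2" "s1 \<in> leaves V adj" "s2 \<in> leaves V adj"
    "pend_leaf V adj (parent v0, v0) = i" "central_edge v0 i i s1 s2"
proof (cases "v0 \<in> leaves V adj")
  case True
  then have "pend_leaf V adj (parent v0, v0) = v0" "pend_inner V adj (parent v0, v0) = parent v0"
    by (simp_all add: pend_leaf_def pend_inner_def)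
  moreover have a: "s1 \<in> leaves V adj" "s2 \<in> leaves V adj" "s1 \<noteq> v0" "s2 \<noteq> v0"
    "on_path V adj (parent v0) s1 s2"
    using adm pend calculation unfolding admissible_def by auto
  moreover have "s1 \<noteq> s2 \<and> central_edge v0 v0 v0 s1 s2"
    using central_edge_leaf_child[OF rl m3 True v0(2) a(1,3) a(2,4) a(5)] .
  ultimately show ?thesis using that[of v0] True by blast
next
  case False
  then have "parent v0 \<in> leaves V adj" using pend unfolding is_pendant_def by simp
  then have pr: "parent v0 = r" using leaf_no_child[of "parent v0" v0] v0 by blast
  then have "pend_leaf V adj (parent v0, v0) = r" "pend_inner V adj (parent v0, v0) = v0"
    using False by (simp_all add: pend_leaf_def pend_inner_def)
  moreover have a: "s1 \<in> leaves V adj" "s2 \<in> leaves V adj" "s1 \<noteq> r" "s2 \<noteq> r" "on_path V adj v0 s1 s2"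
    using adm pend calculation unfolding admissible_def by auto
  moreover have "s1 \<noteq> s2 \<and> central_edge v0 r r s1 s2"
    using central_edge_root_child[OF rl v0 pr False a(1,3) a(2,4) a(5)] .
  ultimately show ?thesis using that[of r] rl by blast
qed

lemma edge_ratio:
  assumes rl: "r \<in> leaves V adj" and m3: "card (leaves V adj) \<ge> 3"
    and e: "e \<in> dedges V adj r" and adm: "admissible V adj e s1 s2 s3 s4"
  shows "0 < Rden V adj r psi e s1 s2 s3 s4 h
    \<and> Rnum V adj r psi e s1 s2 s3 s4 h = exp (2 * psi_hat psi e h) * Rden V adj r psi e s1 s2 s3 s4 h"
proof -
  let ?L = "leaves V adj"
  let ?W = "path_weight psi h"
  obtain v0 where v0: "v0 \<in> V" "v0 \<noteq> r" and ev: "e = (parent v0, v0)"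
    using e unfolding dedges_eq by blast
  show ?thesis
  proof (cases "is_pendant V adj e")
    case True
    obtain i where i: "i \<in> ?L" "i \<noteq> s1" "i \<noteq> s2" "s1 \<noteq> s2" and s: "s1 \<in> ?L" "s2 \<in> ?L"
      and pl: "pend_leaf V adj e = i" and c: "central_edge v0 i i s1 s2"
      using pendant_quartet[OF rl m3 v0] True adm ev by blast
    have num: "Rnum V adj r psi e s1 s2 s3 s4 h = exp (?W i s1) * exp (?W i s2)"
      using True pl i s by (simp add: Let_def Rnum_def lab3_pair_label qfour_pair_label)
    have den: "Rden V adj r psi e s1 s2 s3 s4 h = exp (?W s1 s2)"
      using True pl i s by (simp add: Let_def Rden_def lab3_pair_label qfour_pair_label)
    show ?thesis
      using path_weight_four_point[OF c, of psi h] ev unfolding num den by (simp flip: exp_add)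
  next
    case False
    then have inner: "parent v0 \<notin> ?L" "v0 \<notin> ?L" using ev unfolding is_pendant_def by auto
    have s: "s1 \<in> ?L" "s2 \<in> ?L" "s3 \<in> ?L" "s4 \<in> ?L"
      and op: "on_path V adj (parent v0) s1 s2" "\<not> on_path V adj v0 s1 s2"
        "on_path V adj v0 s3 s4" "\<not> on_path V adj (parent v0) s3 s4"
      using adm False ev unfolding admissible_def by auto
    have d: "s1 \<noteq> s2" "s1 \<noteq> s3" "s1 \<noteq> s4" "s2 \<noteq> s3" "s2 \<noteq> s4" "s3 \<noteq> s4"
      and c: "central_edge v0 s1 s2 s3 s4"
      using central_edge_internal[OF v0 inner s op] by blast+
    have num: "Rnum V adj r psi e s1 s2 s3 s4 h = exp (?W s1 s3) * exp (?W s2 s4)"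
      using False s d by (simp add: Let_def Rnum_def lab4_pair_label qfour_pair_label)
    have den: "Rden V adj r psi e s1 s2 s3 s4 h = exp (?W s1 s2) * exp (?W s3 s4)"
      using False s d by (simp add: Let_def Rden_def lab4_pair_label qfour_pair_label)
    show ?thesis
      using path_weight_four_point[OF c, of psi h] ev unfolding num den by (simp flip: exp_add)
  qed
qed

end

text \<open>Since \<open>\<lambda>(C) = -2(\<psi>(C)+\<psi>(T))\<close> and cyclically, \<open>R(C) R(T) \<le> R(G)\<close> says exactly
  \<open>\<psi>(C) \<ge> 0\<close>, and similarly for the other two inequalities.\<close>

lemma ratio_inequalities:
  assumes R: "\<And>h. R h = exp (2 * psi_hat psi e h)"
  shows "(R nC * R nT \<le> R nG \<longleftrightarrow> 0 \<le> psi e nC) \<and> (R nG * R nT \<le> R nC \<longleftrightarrow> 0 \<le> psi e nG)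
       \<and> (R nC * R nG \<le> R nT \<longleftrightarrow> 0 \<le> psi e nT)"
  unfolding R psi_hat_values by (simp add: algebra_simps flip: exp_add)

theorem mainTheorem8:
  fixes V :: "'v set" and adj :: "'v \<Rightarrow> 'v \<Rightarrow> bool" and r :: 'v
    and psi :: "'v \<times> 'v \<Rightarrow> nuc \<Rightarrow> real"
    and s1 s2 s3 s4 :: "'v \<times> 'v \<Rightarrow> 'v"
  assumes tree: "is_tree V adj"
    and m3: "card (leaves V adj) \<ge> 3"
    and deg: "\<forall>v \<in> V - leaves V adj. card (neighbours V adj v) \<ge> 3"
    and root: "r \<in> leaves V adj"
    and sel: "\<forall>e \<in> dedges V adj r. admissible V adj e (s1 e) (s2 e) (s3 e) (s4 e)"
  defines "R \<equiv> \<lambda>e h. Rratio V adj r psi e (s1 e) (s2 e) (s3 e) (s4 e) h"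
  shows "(\<forall>e \<in> dedges V adj r. \<forall>h \<in> {nC, nG, nT}.
            Rden V adj r psi e (s1 e) (s2 e) (s3 e) (s4 e) h \<noteq> 0)
     \<and> ((\<forall>e \<in> dedges V adj r. \<forall>h \<in> {nC, nG, nT}. 0 \<le> psi e h)
         \<longleftrightarrow> (\<forall>e \<in> dedges V adj r.
                R e nC * R e nT \<le> R e nG \<and> R e nG * R e nT \<le> R e nC \<and> R e nC * R e nG \<le> R e nT))
     \<and> (\<forall>e \<in> dedges V adj r.
          (R e nC * R e nT \<le> R e nG \<longleftrightarrow> 0 \<le> psi e nC)
        \<and> (R e nG * R e nT \<le> R e nC \<longleftrightarrow> 0 \<le> psi e nG)
        \<and> (R e nC * R e nG \<le> R e nT \<longleftrightarrow> 0 \<le> psi e nT))"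
proof -
  interpret rooted_tree V adj r
    using tree root by unfold_locales (auto simp: leaves_def)
  have den: "Rden V adj r psi e (s1 e) (s2 e) (s3 e) (s4 e) h \<noteq> 0"
    and ratio: "R e h = exp (2 * psi_hat psi e h)" if "e \<in> dedges V adj r" for e h
  proof -
    have "0 < Rden V adj r psi e (s1 e) (s2 e) (s3 e) (s4 e) h \<and> Rnum V adj r psi e (s1 e) (s2 e) (s3 e) (s4 e) h
        = exp (2 * psi_hat psi e h) * Rden V adj r psi e (s1 e) (s2 e) (s3 e) (s4 e) h"
      using edge_ratio[OF root m3 that] sel that by blast
    then show "Rden V adj r psi e (s1 e) (s2 e) (s3 e) (s4 e) h \<noteq> 0" "R e h = exp (2 * psi_hat psi e h)"
      unfolding R_def Rratio_def by auto
  qed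
  have "(R e nC * R e nT \<le> R e nG \<longleftrightarrow> 0 \<le> psi e nC) \<and> (R e nG * R e nT \<le> R e nC \<longleftrightarrow> 0 \<le> psi e nG)
      \<and> (R e nC * R e nG \<le> R e nT \<longleftrightarrow> 0 \<le> psi e nT)" if "e \<in> dedges V adj r" for e
    by (rule ratio_inequalities) (rule ratio[OF that])
  then show ?thesis using den by auto
qed

end
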